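(* Let $\mathcal{K}^{\langle\infty\rangle}$ be a planar unbounded simple nested fractal, let $M\in\mathbb{Z}$ and let $\ell_{M,0}:V_M^{\langle M\rangle}\to\mathcal{A}$ be a bijection. Then $\mathcal{K}^{\langle\infty\rangle}$ has the good labelling property if and only if there exists an extension $\widetilde{\ell}_{M,0}:V_M^{\langle M+1\rangle}\to\mathcal{A}$ of $\ell_{M,0}$ such that for every $M$-complex $\Delta_M\subset\mathcal{K}^{\langle M+1\rangle}$, written as $\Delta_M=\mathcal{K}^{\langle M\rangle}+L^{M+1}\nu_{i}$ with $i\in\{1,\dots,N\}$, there exists a rotation $R_{\Delta_M}\in\mathcal{R}_M$ with $$\widetilde{\ell}_{M,0}\big(R_{\Delta_M}(v-L^{M+1}\nu_{i})\big)=\widetilde{\ell}_{M,0}(v),\qquad v\in V(\Delta_M).$$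
   Context: Setting: $L>1$, $N\ge2$, $\nu_1=0,\dots,\nu_N\in\mathbb{R}^2$, $\Psi_i(x)=x/L+\nu_i$, and $\mathcal{K}^{\langle 0\rangle}=\bigcup_i\Psi_i(\mathcal{K}^{\langle 0\rangle})$ is a planar simple nested fractal (essential fixed points $V_0^{\langle0\rangle}$: fixed points $x$ for which there are another fixed point $y$ and $\Psi_i\ne\Psi_j$ with $\Psi_i(x)=\Psi_j(y)$; open set condition, nesting $\Psi_i(\mathcal{K}^{\langle 0\rangle})\cap\Psi_j(\mathcal{K}^{\langle 0\rangle})=\Psi_i(V_0^{\langle 0\rangle})\cap\Psi_j(V_0^{\langle 0\rangle})$ for $i\ne j$, symmetry with respect to perpendicular bisectors of pairs of essential fixed points, and connectivity). Let $k=\#V_0^{\langle0\rangle}\ge3$; $V_0^{\langle0\rangle}$ spans a regular $k$-gon. $\mathcal{K}^{\langle M\rangle}=L^M\mathcal{K}^{\langle 0\rangle}$ ($M\in\mathbb{Z}$), $\mathcal{K}^{\langle\infty\rangle}=\bigcup_{M\ge0}\mathcal{K}^{\langle M\rangle}$. An $M$-complex is $\Delta_M=\mathcal{K}^{\langle M\rangle}+\nu_{\Delta_M}$, $\nu_{\Delta_M}=\sum_{j=M+1}^{J}L^j\nu_{i_j}$ ($J\ge M+1$), with vertex set $V(\Delta_M)=L^MV_0^{\langle0\rangle}+\nu_{\Delta_M}$. $V_M^{\langle M\rangle}=L^MV_0^{\langle0\rangle}$; $V_M^{\langle M+1\rangle}$ is the union of $V(\Delta_M)$ over $M$-complexes $\Delta_M\subset\mathcal{K}^{\langle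 M+1\rangle}$; $V_M^{\langle\infty\rangle}$ is the union of $V(\Delta_M)$ over all $M$-complexes. $\mathcal{A}$ is an alphabet of $k$ symbols; $\mathcal{R}_M$ is the set of the $k$ rotations about the barycenter of $\mathcal{K}^{\langle M\rangle}$ mapping $V_M^{\langle M\rangle}$ onto itself. A good labelling function of order $M$ is $\ell_M:V_M^{\langle\infty\rangle}\to\mathcal{A}$ that is bijective on $V_M^{\langle M\rangle}$ and such that for each $M$-complex $\Delta_M=\mathcal{K}^{\langle M\rangle}+\nu_{\Delta_M}$ there is $R_{\Delta_M}\in\mathcal{R}_M$ with $\ell_M(v)=\ell_M(R_{\Delta_M}(v-\nu_{\Delta_M}))$, $v\in V(\Delta_M)$. $\mathcal{K}^{\langle\infty\rangle}$ has the good labelling property if a good labelling function of some order exists. *)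

theory Defs
  imports "HOL-Analysis.Analysis"
begin

text \<open>The plane is modelled by the type complex.  Data of the fractal:
  similarity ratio L, number of maps N, translation vectors nu 1, ..., nu N
  (nu 1 = 0), and the compact attractor K0.\<close>

definition Psi :: "real \<Rightarrow> (nat \<Rightarrow> complex) \<Rightarrow> nat \<Rightarrow> complex \<Rightarrow> complex" where
  "Psi L nu i x = x / complex_of_real L + nu i"

definition fixed_pts :: "real \<Rightarrow> nat \<Rightarrow> (nat \<Rightarrow> complex) \<Rightarrow> complex set" where
  "fixed_pts L N nu = {x. \<exists>i\<in>{1..N}. Psi L nu i x = x}"

definition ess_fixed_pts :: "real \<Rightarrow> nat \<Rightarrow> (nat \<Rightarrow> complex) \<Rightarrow> complex set" where
  "ess_fixed_pts L N nu =
     {x \<in> fixed_pts L N nu. \<exists>y\<in>fixed_pts L N nu. y \<noteq> x \<and>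
        (\<exists>i\<in>{1..N}. \<exists>j\<in>{1..N}. Psi L nu i \<noteq> Psi L nu j \<and> Psi L nu i x = Psi L nu j y)}"

definition bisector_reflection :: "complex \<Rightarrow> complex \<Rightarrow> complex \<Rightarrow> complex" where
  "bisector_reflection x y z =
     z - (2 * inner (z - (x + y) / 2) (sgn (y - x))) *\<^sub>R sgn (y - x)"

definition planar_simple_nested_fractal ::
    "real \<Rightarrow> nat \<Rightarrow> (nat \<Rightarrow> complex) \<Rightarrow> complex set \<Rightarrow> bool" where
  "planar_simple_nested_fractal L N nu K0 \<longleftrightarrow>
     L > 1 \<and> N \<ge> 2 \<and> nu 1 = 0 \<and>
     \<comment> \<open>K0 is the attractor of the IFS\<close>
     compact K0 \<and> K0 \<noteq> {} \<and> K0 = (\<Union>i\<in>{1..N}. Psi L nu i ` K0) \<and>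
     \<comment> \<open>open set condition\<close>
     (\<exists>U. open U \<and> bounded U \<and> U \<noteq> {} \<and>
        (\<forall>i\<in>{1..N}. Psi L nu i ` U \<subseteq> U) \<and>
        (\<forall>i\<in>{1..N}. \<forall>j\<in>{1..N}. i \<noteq> j \<longrightarrow> Psi L nu i ` U \<inter> Psi L nu j ` U = {})) \<and>
     \<comment> \<open>nesting\<close>
     (\<forall>i\<in>{1..N}. \<forall>j\<in>{1..N}. i \<noteq> j \<longrightarrow>
        Psi L nu i ` K0 \<inter> Psi L nu j ` K0 =
        Psi L nu i ` ess_fixed_pts L N nu \<inter> Psi L nu j ` ess_fixed_pts L N nu) \<and>
     \<comment> \<open>symmetry\<close>
     (\<forall>x\<in>ess_fixed_pts L N nu. \<forall>y\<in>ess_fixed_pts L N nu. x \<noteq> y \<longrightarrow>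
        (\<forall>i\<in>{1..N}. \<exists>j\<in>{1..N}.
           bisector_reflection x y ` Psi L nu i ` ess_fixed_pts L N nu =
           Psi L nu j ` ess_fixed_pts L N nu)) \<and>
     \<comment> \<open>connectivity of the graph on V_0^(1)\<close>
     (let V1 = (\<Union>i\<in>{1..N}. Psi L nu i ` ess_fixed_pts L N nu);
          E = {(x, y). \<exists>i\<in>{1..N}. x \<in> Psi L nu i ` ess_fixed_pts L N nu \<and>
                                    y \<in> Psi L nu i ` ess_fixed_pts L N nu}
      in \<forall>x\<in>V1. \<forall>y\<in>V1. (x, y) \<in> E\<^sup>*)"

definition scl :: "real \<Rightarrow> int \<Rightarrow> complex" where
  "scl L M = complex_of_real (L powi M)"

definition K_M :: "real \<Rightarrow> complex set \<Rightarrow> int \<Rightarrow> complex set" where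
  "K_M L K0 M = (\<lambda>x. scl L M * x) ` K0"

text \<open>Admissible translation vectors nu_Delta of M-complexes:
  sum over j = M+1..J of L^j nu_(i_j), J \<ge> M+1, i_j \<in> {1..N}.\<close>
definition complex_shifts :: "real \<Rightarrow> nat \<Rightarrow> (nat \<Rightarrow> complex) \<Rightarrow> int \<Rightarrow> complex set" where
  "complex_shifts L N nu M =
     {(\<Sum>j\<in>{M+1..J}. scl L j * nu (w j)) | J w.
        M + 1 \<le> J \<and> (\<forall>j\<in>{M+1..J}. w j \<in> {1..N})}"

definition M_complex :: "real \<Rightarrow> complex set \<Rightarrow> int \<Rightarrow> complex \<Rightarrow> complex set" where
  "M_complex L K0 M t = (\<lambda>x. x + t) ` K_M L K0 M"

definition cell_vertices :: "real \<Rightarrow> nat \<Rightarrow> (nat \<Rightarrow> complex) \<Rightarrow> int \<Rightarrow> complex \<Rightarrow> complex set" where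
  "cell_vertices L N nu M t = (\<lambda>x. scl L M * x + t) ` ess_fixed_pts L N nu"

definition V_MM :: "real \<Rightarrow> nat \<Rightarrow> (nat \<Rightarrow> complex) \<Rightarrow> int \<Rightarrow> complex set" where
  "V_MM L N nu M = (\<lambda>x. scl L M * x) ` ess_fixed_pts L N nu"

definition V_M_next :: "real \<Rightarrow> nat \<Rightarrow> (nat \<Rightarrow> complex) \<Rightarrow> complex set \<Rightarrow> int \<Rightarrow> complex set" where
  "V_M_next L N nu K0 M =
     \<Union>{cell_vertices L N nu M t | t. t \<in> complex_shifts L N nu M \<and>
                                     M_complex L K0 M t \<subseteq> K_M L K0 (M + 1)}"

definition V_M_inf :: "real \<Rightarrow> nat \<Rightarrow> (nat \<Rightarrow> complex) \<Rightarrow> int \<Rightarrow> complex set" where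
  "V_M_inf L N nu M = (\<Union>t\<in>complex_shifts L N nu M. cell_vertices L N nu M t)"

text \<open>Barycenter of K^(M), taken as the barycenter of its vertex polygon V_M^(M).\<close>
definition barycenter_M :: "real \<Rightarrow> nat \<Rightarrow> (nat \<Rightarrow> complex) \<Rightarrow> int \<Rightarrow> complex" where
  "barycenter_M L N nu M =
     (\<Sum>v\<in>V_MM L N nu M. v) / of_nat (card (V_MM L N nu M))"

definition rotations_M :: "real \<Rightarrow> nat \<Rightarrow> (nat \<Rightarrow> complex) \<Rightarrow> int \<Rightarrow> (complex \<Rightarrow> complex) set" where
  "rotations_M L N nu M =
     {R. \<exists>u. norm u = 1 \<and>
            R = (\<lambda>z. barycenter_M L N nu M + u * (z - barycenter_M L N nu M)) \<and>
            R ` V_MM L N nu M = V_MM L N nu M}"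

definition good_labelling ::
    "real \<Rightarrow> nat \<Rightarrow> (nat \<Rightarrow> complex) \<Rightarrow> 'a set \<Rightarrow> int \<Rightarrow> (complex \<Rightarrow> 'a) \<Rightarrow> bool" where
  "good_labelling L N nu A M l \<longleftrightarrow>
     (\<forall>v\<in>V_M_inf L N nu M. l v \<in> A) \<and>
     bij_betw l (V_MM L N nu M) A \<and>
     (\<forall>t\<in>complex_shifts L N nu M. \<exists>R\<in>rotations_M L N nu M.
        \<forall>v\<in>cell_vertices L N nu M t. l v = l (R (v - t)))"

definition good_labelling_property ::
    "real \<Rightarrow> nat \<Rightarrow> (nat \<Rightarrow> complex) \<Rightarrow> 'a set \<Rightarrow> bool" where
  "good_labelling_property L N nu A \<longleftrightarrow> (\<exists>M l. good_labelling L N nu A M l)"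

end

theory Submission
  imports Defs
begin

text \<open>Rescaling by L^-M turns a labelling of V_M^(M+1) into a labelling g of the
  essential fixed points V0 and of the 1-cells V0 + L nu_i, and the condition of the theorem
  says that each such cell carries the labels of V0 turned by a rotation rho_i of V0.
  A good labelling yields such a g directly, after permuting the alphabet so that it
  extends l0.  Conversely, g is propagated level by level: the vertex psi_i y of level n+1
  receives the label of rho_i y at level n.  This is well defined because, by nesting, two
  distinct 1-cells only meet in vertices, where g prescribes the same label.  The labels of
  every cell are then a rotation of those of V0 because the rotations of V0 commute with
  the maps psi_i up to a change of index: every such rotation is a product of two
  reflections in bisectors of essential fixed points, and these map 1-cells onto 1-cells
  by the symmetry axiom.\<close>

section \<open>Anti-affine maps of the plane\<close>

definition mean :: "complex set \<Rightarrow> complex" where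
  "mean S = sum id S / of_nat (card S)"

lemma real_affine_perm_fixes_mean:
  fixes f :: "complex \<Rightarrow> complex"
  assumes fin: "finite S" and ne: "S \<noteq> {}" and lin: "linear f"
    and perm: "(\<lambda>z. a + f z) ` S = S"
  shows "a + f (mean S) = mean S"
proof -
  have n0: "(of_nat (card S) :: complex) \<noteq> 0" using fin ne by simp
  have inj: "inj_on (\<lambda>z. a + f z) S" using fin perm by (simp add: finite_surj_inj)
  have "sum id S = sum (\<lambda>z. a + f z) S"
    using sum.reindex[OF inj, of id] perm by simp
  also have "\<dots> = of_nat (card S) * a + f (sum id S)"
    using linear_sum[OF lin, of id S] by (simp add: sum.distrib)
  finally have sum_eq: "sum id S = of_nat (card S) * a + f (sum id S)" .
  have "f (mean S) = f (sum id S) / of_nat (card S)"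
    using linear_scale[OF lin, of "inverse (real (card S))" "sum id S"]
    by (simp add: mean_def divide_inverse scaleR_conv_of_real mult.commute)
  then show ?thesis
    unfolding mean_def using n0 by (subst (2) sum_eq) (simp add: field_simps)
qed

lemma antiaffine_dist:
  assumes "norm b = 1"
  shows "norm ((a + b * cnj z) - (a + b * cnj w)) = norm (z - w)"
proof -
  have "(a + b * cnj z) - (a + b * cnj w) = b * cnj (z - w)" by (simp add: algebra_simps)
  also have "norm \<dots> = norm (z - w)" by (simp only: norm_mult complex_mod_cnj assms mult_1)
  finally show ?thesis .
qed

lemma antiaffine_involution:
  assumes "norm b = 1" and "a + b * cnj c = c"
  shows "a + b * cnj (a + b * cnj z) = z"
proof -
  have bb: "b * cnj b = 1" using assms(1) by (metis complex_norm_square of_real_1 power_one)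
  have cnj_a: "cnj a = cnj c - cnj b * c"
    using arg_cong[OF assms(2), of cnj] by (simp add: eq_diff_eq)
  have "a + b * cnj a = (a + b * cnj c) - (b * cnj b) * c"
    by (subst cnj_a) (simp add: algebra_simps)
  then have "a + b * cnj a = 0" using assms(2) bb by simp
  moreover have "a + b * cnj (a + b * cnj z) = (a + b * cnj a) + (b * cnj b) * z"
    by (simp add: algebra_simps)
  ultimately show ?thesis using bb by simp
qed

lemma antiaffine_eq_if_swap:
  fixes z w a1 b1 a2 b2 :: complex
  assumes "z \<noteq> w"
    and "a1 + b1 * cnj z = w" "a1 + b1 * cnj w = z"
    and "a2 + b2 * cnj z = w" "a2 + b2 * cnj w = z"
  shows "a1 = a2 \<and> b1 = b2"
proof -
  have "b1 * (cnj z - cnj w) = (a1 + b1 * cnj z) - (a1 + b1 * cnj w)"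
    and "b2 * (cnj z - cnj w) = (a2 + b2 * cnj z) - (a2 + b2 * cnj w)"
    by (simp_all add: algebra_simps)
  then have "b1 * (cnj z - cnj w) = w - z" "b2 * (cnj z - cnj w) = w - z"
    using assms(2-5) by simp_all
  moreover have "cnj z - cnj w \<noteq> 0" using assms(1) by simp
  ultimately have "b1 = b2" by (metis mult_right_cancel)
  then show ?thesis using assms(2,4) by (metis add_right_cancel)
qed

lemma bisector_reflection_eq:
  assumes "x \<noteq> y"
  shows "bisector_reflection x y z = (x + y) / 2 - (sgn (y - x))\<^sup>2 * cnj (z - (x + y) / 2)"
proof -
  define s where "s = sgn (y - x)"
  define m where "m = (x + y) / 2"
  have s1: "s * cnj s = 1" using assms unfolding s_def
    by (simp add: complex_norm_square[symmetric] norm_sgn)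
  have "inner (z - m) s = Re ((z - m) * cnj s)"
    by (simp add: inner_complex_def)
  then have "complex_of_real (2 * inner (z - m) s) = (z - m) * cnj s + cnj (z - m) * s"
    using complex_add_cnj[of "(z - m) * cnj s"] by simp
  then have "(2 * inner (z - m) s) *\<^sub>R s = ((z - m) * cnj s + cnj (z - m) * s) * s"
    by (simp add: scaleR_conv_of_real)
  also have "\<dots> = (z - m) * (s * cnj s) + cnj (z - m) * s\<^sup>2"
    by (simp add: algebra_simps power2_eq_square)
  finally have "(2 * inner (z - m) s) *\<^sub>R s = (z - m) + cnj (z - m) * s\<^sup>2"
    using s1 by simp
  then show ?thesis unfolding bisector_reflection_def s_def[symmetric] m_def[symmetric]
    by (simp add: algebra_simps)
qed

lemma bisector_reflection_antiaffine:
  assumes "x \<noteq> y"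
  obtains a b where "\<And>z. bisector_reflection x y z = a + b * cnj z" and "norm b = 1"
proof
  show "bisector_reflection x y z =
      ((x + y) / 2 + (sgn (y - x))\<^sup>2 * cnj ((x + y) / 2)) + - (sgn (y - x))\<^sup>2 * cnj z" for z
    by (simp add: bisector_reflection_eq[OF assms] algebra_simps)
  show "norm (- (sgn (y - x))\<^sup>2) = 1" using assms by (simp add: norm_power norm_sgn)
qed

lemma bisector_reflection_midpoint: "bisector_reflection x y ((x + y) / 2) = (x + y) / 2"
  by (simp add: bisector_reflection_def)

lemma bisector_reflection_involution:
  assumes "x \<noteq> y"
  shows "bisector_reflection x y (bisector_reflection x y z) = z"
proof -
  obtain a b where ab: "\<And>z. bisector_reflection x y z = a + b * cnj z" and b: "norm b = 1"
    using bisector_reflection_antiaffine[OF assms] by blast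
  have "a + b * cnj ((x + y) / 2) = (x + y) / 2"
    using bisector_reflection_midpoint[of x y] by (simp only: ab)
  then show ?thesis unfolding ab by (rule antiaffine_involution[OF b])
qed

lemma bisector_reflection_swap:
  assumes "x \<noteq> y"
  shows "bisector_reflection x y x = y"
proof -
  define d where "d = y - x"
  have "d \<noteq> 0" using assms d_def by auto
  have "(sgn d)\<^sup>2 * cnj d = d * (d * cnj d) / (complex_of_real (norm d))\<^sup>2"
    by (simp add: sgn_div_norm power2_eq_square divide_inverse scaleR_conv_of_real algebra_simps)
  also have "\<dots> = d" using \<open>d \<noteq> 0\<close> by (simp add: complex_norm_square[symmetric])
  finally have "(sgn d)\<^sup>2 * cnj d = d" .
  then have "(sgn d)\<^sup>2 * cnj (- d / 2) = - d / 2" by simp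
  moreover have "x - (x + y) / 2 = - d / 2" unfolding d_def by (simp add: field_simps)
  ultimately have "bisector_reflection x y x = (x + y) / 2 + d / 2"
    unfolding bisector_reflection_eq[OF assms] d_def[symmetric] by simp
  also have "\<dots> = y" unfolding d_def by (simp add: field_simps)
  finally show ?thesis .
qed

lemma bisector_reflection_dist:
  assumes "x \<noteq> y"
  shows "norm (bisector_reflection x y z - bisector_reflection x y w) = norm (z - w)"
  by (metis antiaffine_dist bisector_reflection_antiaffine[OF assms])

lemma bisector_reflection_fixes_mean:
  assumes "x \<noteq> y" and "finite S" and "S \<noteq> {}" and "bisector_reflection x y ` S = S"
  shows "bisector_reflection x y (mean S) = mean S"
proof -
  obtain a b where ab: "\<And>z. bisector_reflection x y z = a + b * cnj z"
    using bisector_reflection_antiaffine[OF assms(1)] by blast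
  have "linear (\<lambda>z. b * cnj z)"
    by (rule linearI) (simp_all add: algebra_simps scaleR_conv_of_real)
  moreover have "(\<lambda>z. a + b * cnj z) ` S = S" using assms(4) ab by simp
  ultimately show ?thesis
    unfolding ab by (rule real_affine_perm_fixes_mean[OF assms(2,3)])
qed

lemma card_le_2_if_subset_doubleton: "S \<subseteq> {p, q} \<Longrightarrow> card S \<le> 2"
  using card_mono[of "{p, q}" S] card_insert_le_m1[of 2 "{q}" p] by simp

lemma card_le_2_if_squares_eq:
  fixes c K :: complex
  assumes "\<forall>z\<in>S. (z - c)\<^sup>2 = K"
  shows "card S \<le> 2"
proof (cases "S = {}")
  case False
  then obtain z0 where z0: "z0 \<in> S" by auto
  have "S \<subseteq> {z0, 2 * c - z0}"
  proof
    fix z assume "z \<in> S"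
    then have "(z - c)\<^sup>2 = (z0 - c)\<^sup>2" using assms z0 by auto
    then have "(z - z0) * (z + z0 - 2 * c) = 0" by (simp add: algebra_simps power2_eq_square)
    then have "z - z0 = 0 \<or> z + z0 - 2 * c = 0" by simp
    then have "z = z0 \<or> z = 2 * c - z0" by (metis eq_iff_diff_eq_0 diff_diff_eq2 diff_eq_eq)
    then show "z \<in> {z0, 2 * c - z0}" by blast
  qed
  then show ?thesis by (rule card_le_2_if_subset_doubleton)
qed simp

lemma card_le_2_if_on_two_circles:
  fixes c1 c2 :: complex
  assumes "c1 \<noteq> c2" and "\<forall>z\<in>S. norm (z - c1) = r1 \<and> norm (z - c2) = r2"
  shows "card S \<le> 2"
proof -
  define d where "d = c2 - c1"
  define a where "a = (r1\<^sup>2 + (norm d)\<^sup>2 - r2\<^sup>2) / 2"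
  define h where "h = sqrt ((r1 * norm d)\<^sup>2 - a\<^sup>2)"
  have "cnj d \<noteq> 0" using assms(1) d_def by simp
  have "S \<subseteq> {c1 + Complex a h / cnj d, c1 + Complex a (- h) / cnj d}"
  proof
    fix z assume "z \<in> S"
    define q where "q = (z - c1) * cnj d"
    have n1: "norm (z - c1) = r1" and n2: "norm (z - c1 - d) = r2"
      using assms(2) \<open>z \<in> S\<close> unfolding d_def by (auto simp: algebra_simps)
    have "(norm (z - c1 - d))\<^sup>2 = (norm (z - c1))\<^sup>2 - 2 * Re q + (norm d)\<^sup>2"
      unfolding q_def cmod_power2 by (simp add: power2_eq_square algebra_simps)
    then have re: "Re q = a" using n1 n2 unfolding a_def by (simp add: field_simps)
    have "norm q = r1 * norm d" using n1 unfolding q_def by (simp add: norm_mult)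
    then have "(Re q)\<^sup>2 + (Im q)\<^sup>2 = (r1 * norm d)\<^sup>2" by (metis cmod_power2)
    then have "(Im q)\<^sup>2 = (r1 * norm d)\<^sup>2 - a\<^sup>2" using re by simp
    then have "h = \<bar>Im q\<bar>" unfolding h_def by (metis real_sqrt_abs)
    then have "Im q = h \<or> Im q = - h" by linarith
    then have "q = Complex a h \<or> q = Complex a (- h)" using re by (auto simp: complex_eq_iff)
    moreover have "z = c1 + q / cnj d" using \<open>cnj d \<noteq> 0\<close> unfolding q_def by simp
    ultimately show "z \<in> {c1 + Complex a h / cnj d, c1 + Complex a (- h) / cnj d}" by auto
  qed
  then show ?thesis by (rule card_le_2_if_subset_doubleton)
qed

section \<open>Symmetries of the essential fixed points\<close>

locale nested_fractal =
  fixes L :: real and N :: nat and nu :: "nat \<Rightarrow> complex" and K0 :: "complex set"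
  assumes fractal: "planar_simple_nested_fractal L N nu K0"
    and three_le_card_V0: "3 \<le> card (ess_fixed_pts L N nu)"
begin

abbreviation V0 where "V0 \<equiv> ess_fixed_pts L N nu"
abbreviation psi where "psi \<equiv> Psi L nu"
abbreviation Lc where "Lc \<equiv> complex_of_real L"

lemma L_gt_1: "L > 1" and N_ge_2: "N \<ge> 2" and nu_1: "nu 1 = 0" and compact_K0: "compact K0"
  and K0_nonempty: "K0 \<noteq> {}" and K0_self_similar: "K0 = (\<Union>i\<in>{1..N}. psi i ` K0)"
  using fractal unfolding planar_simple_nested_fractal_def by auto

lemma nesting:
  "i \<in> {1..N} \<Longrightarrow> j \<in> {1..N} \<Longrightarrow> i \<noteq> j \<Longrightarrow> psi i ` K0 \<inter> psi j ` K0 = psi i ` V0 \<inter> psi j ` V0"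
  using fractal unfolding planar_simple_nested_fractal_def by auto

lemma symmetry:
  "x \<in> V0 \<Longrightarrow> y \<in> V0 \<Longrightarrow> x \<noteq> y \<Longrightarrow> i \<in> {1..N} \<Longrightarrow>
     \<exists>j\<in>{1..N}. bisector_reflection x y ` psi i ` V0 = psi j ` V0"
  using fractal unfolding planar_simple_nested_fractal_def by blast

lemma finite_V0: "finite V0"
  using three_le_card_V0 by (metis card.infinite not_numeral_le_zero)

lemma V0_nonempty: "V0 \<noteq> {}"
  using three_le_card_V0 by auto

lemma Lc_nonzero: "Lc \<noteq> 0"
  using L_gt_1 by simp

lemma psi_eq: "psi i z = z / Lc + nu i"
  by (simp add: Psi_def)

lemma psi_1: "psi 1 z = z / Lc"
  using nu_1 by (simp add: psi_eq)

lemma psi_inject: "psi i z = psi i w \<longleftrightarrow> z = w"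
  using Lc_nonzero by (auto simp: psi_eq)

lemma one_mem_indices: "1 \<in> {1..N}"
  using N_ge_2 by simp

definition V1 :: "complex set" where
  "V1 = (\<Union>i\<in>{1..N}. psi i ` V0)"

definition center :: complex where
  "center = mean V0"

lemma bisector_reflection_V1:
  assumes "x \<in> V0" "y \<in> V0" "x \<noteq> y"
  shows "bisector_reflection x y ` V1 = V1"
proof -
  let ?s = "bisector_reflection x y"
  have sub: "?s ` V1 \<subseteq> V1"
    unfolding V1_def using symmetry[OF assms] by (fastforce simp: image_UN)
  then have "?s ` ?s ` V1 \<subseteq> ?s ` V1" by (rule image_mono)
  then have "V1 \<subseteq> ?s ` V1" by (simp add: image_image bisector_reflection_involution[OF assms(3)])
  with sub show ?thesis by blast
qed

lemma dist_eq_if_bisector_reflections_fix: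
  assumes fixes_c: "\<And>x y. x \<in> V0 \<Longrightarrow> y \<in> V0 \<Longrightarrow> x \<noteq> y \<Longrightarrow> bisector_reflection x y c = c"
    and "x \<in> V0" "y \<in> V0"
  shows "norm (x - c) = norm (y - c)"
proof (cases "x = y")
  case False
  have "norm (x - c) = norm (bisector_reflection x y x - bisector_reflection x y c)"
    by (rule bisector_reflection_dist[OF False, symmetric])
  then show ?thesis by (simp add: bisector_reflection_swap[OF False] fixes_c[OF assms(2,3) False])
qed simp

text \<open>The symmetry axiom gives s ` psi 1 ` V0 = psi j ` V0 for the reflection s; as s is
  anti-affine and psi 1, psi j are homotheties with the same ratio, s ` V0 is a translate
  of V0.\<close>
lemma bisector_reflection_V0_translate:
  assumes xy: "x \<in> V0" "y \<in> V0" "x \<noteq> y"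
  obtains e where "bisector_reflection x y ` V0 = (\<lambda>z. z + e) ` V0"
proof -
  let ?s = "bisector_reflection x y"
  obtain a b where ab: "\<And>z. ?s z = a + b * cnj z"
    using bisector_reflection_antiaffine[OF xy(3)] by blast
  obtain j where j: "j \<in> {1..N}" and sj: "?s ` psi 1 ` V0 = psi j ` V0"
    using symmetry[OF xy one_mem_indices] by blast
  define e where "e = Lc * nu j - (Lc - 1) * a"
  have "?s (psi 1 z) = psi j (?s z - e)" for z
    unfolding ab psi_eq e_def using Lc_nonzero nu_1 by (simp add: field_simps)
  then have "psi j ` (\<lambda>z. ?s z - e) ` V0 = psi j ` V0"
    using sj by (simp add: image_image)
  then have "(\<lambda>z. ?s z - e) ` V0 = V0"
    by (simp add: inj_image_eq_iff inj_on_def psi_inject)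
  then have "?s ` V0 = (\<lambda>z. z + e) ` V0" by (force simp: image_iff)
  then show thesis by (rule that)
qed

lemma bisector_reflection_mean_V1:
  "x \<in> V0 \<Longrightarrow> y \<in> V0 \<Longrightarrow> x \<noteq> y \<Longrightarrow> bisector_reflection x y (mean V1) = mean V1"
  using bisector_reflection_fixes_mean[OF _ _ _ bisector_reflection_V1] finite_V0 V0_nonempty
    one_mem_indices unfolding V1_def by blast

lemma dist_mean_V1_eq: "x \<in> V0 \<Longrightarrow> y \<in> V0 \<Longrightarrow> norm (x - mean V1) = norm (y - mean V1)"
  by (rule dist_eq_if_bisector_reflections_fix[OF bisector_reflection_mean_V1])

text \<open>V0 and its translate by e both lie on the circle of radius r around the mean of
  V1, since s fixes that point; two distinct circles meet in at most two points.\<close>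
lemma bisector_reflection_V0:
  assumes xy: "x \<in> V0" "y \<in> V0" "x \<noteq> y"
  shows "bisector_reflection x y ` V0 = V0"
proof -
  let ?s = "bisector_reflection x y"
  obtain e where s_translate: "?s ` V0 = (\<lambda>z. z + e) ` V0"
    using bisector_reflection_V0_translate[OF xy] .
  define r where "r = norm (x - mean V1)"
  have on_circle: "norm (z - mean V1) = r" if "z \<in> V0" for z
    unfolding r_def using dist_mean_V1_eq[OF that xy(1)] .
  have on_translated_circle: "norm (z - (mean V1 - e)) = r" if "z \<in> V0" for z
  proof -
    have "z + e \<in> ?s ` V0" unfolding s_translate using that by (rule imageI)
    then obtain w where "w \<in> V0" "z + e = ?s w" by blast
    then have "norm (z - (mean V1 - e)) = norm (?s w - ?s (mean V1))"
      using bisector_reflection_mean_V1[OF xy] by (simp add: algebra_simps)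
    also have "\<dots> = r" using on_circle[OF \<open>w \<in> V0\<close>] by (simp add: bisector_reflection_dist[OF xy(3)])
    finally show ?thesis .
  qed
  have "e = 0"
  proof (rule ccontr)
    assume "e \<noteq> 0"
    then have "card V0 \<le> 2"
      using on_circle on_translated_circle
      by (intro card_le_2_if_on_two_circles[of "mean V1" "mean V1 - e" V0 r r]) simp_all
    then show False using three_le_card_V0 by simp
  qed
  then show ?thesis using s_translate by simp
qed

lemma bisector_reflection_center:
  "x \<in> V0 \<Longrightarrow> y \<in> V0 \<Longrightarrow> x \<noteq> y \<Longrightarrow> bisector_reflection x y center = center"
  unfolding center_def
  by (rule bisector_reflection_fixes_mean[OF _ finite_V0 V0_nonempty bisector_reflection_V0])

lemma dist_center_eq: "x \<in> V0 \<Longrightarrow> y \<in> V0 \<Longrightarrow> norm (x - center) = norm (y - center)"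
  by (rule dist_eq_if_bisector_reflections_fix[OF bisector_reflection_center])

lemma ex_V0_ne_center: "\<exists>x\<in>V0. x \<noteq> center"
proof (rule ccontr)
  assume "\<not> (\<exists>x\<in>V0. x \<noteq> center)"
  then have "card V0 \<le> card {center}" by (intro card_mono) auto
  then show False using three_le_card_V0 by simp
qed

definition rot :: "complex \<Rightarrow> complex \<Rightarrow> complex" where
  "rot u z = center + u * (z - center)"

definition sym_rots :: "complex set" where
  "sym_rots = {u. norm u = 1 \<and> rot u ` V0 = V0}"

lemma rot_rot: "rot u (rot v z) = rot (u * v) z"
  by (simp add: rot_def algebra_simps)

lemma rot_1 [simp]: "rot 1 z = z"
  by (simp add: rot_def)

lemma one_mem_sym_rots: "1 \<in> sym_rots"
  unfolding sym_rots_def by simp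

lemma mult_mem_sym_rots:
  assumes "u \<in> sym_rots" "v \<in> sym_rots" shows "u * v \<in> sym_rots"
proof -
  have "rot (u * v) ` V0 = rot u ` rot v ` V0" by (simp add: image_image rot_rot)
  then show ?thesis using assms unfolding sym_rots_def by (simp add: norm_mult)
qed

lemma rot_mem_V0: "u \<in> sym_rots \<Longrightarrow> x \<in> V0 \<Longrightarrow> rot u x \<in> V0"
  unfolding sym_rots_def by auto

definition maps_cells :: "(complex \<Rightarrow> complex) \<Rightarrow> bool" where
  "maps_cells f \<longleftrightarrow> (\<forall>k\<in>{1..N}. \<exists>k'\<in>{1..N}. f ` psi k ` V0 = psi k' ` V0)"

lemma maps_cells_comp: "maps_cells f \<Longrightarrow> maps_cells g \<Longrightarrow> maps_cells (f \<circ> g)"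
  unfolding maps_cells_def by (metis image_comp)

lemma maps_cells_bisector_reflection:
  "x \<in> V0 \<Longrightarrow> y \<in> V0 \<Longrightarrow> x \<noteq> y \<Longrightarrow> maps_cells (bisector_reflection x y)"
  unfolding maps_cells_def using symmetry by blast

text \<open>The fixed points of T lie on a line through the center, while V0 lies on a circle
  around it and has at least three points.\<close>
lemma antiaffine_symmetry_moves_V0:
  assumes T: "\<And>z. T z = a + b * cnj z" and Tc: "T center = center"
  shows "\<exists>z\<in>V0. T z \<noteq> z"
proof (rule ccontr)
  assume "\<not> (\<exists>z\<in>V0. T z \<noteq> z)"
  then have fixed: "T z = z" if "z \<in> V0" for z using that by blast
  obtain x0 where x0: "x0 \<in> V0" using V0_nonempty by blast
  have "(z - center)\<^sup>2 = b * complex_of_real ((norm (x0 - center))\<^sup>2)" if "z \<in> V0" for z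
  proof -
    have "T z - center = b * cnj (z - center)" using Tc by (simp add: T algebra_simps)
    then have "z - center = b * cnj (z - center)" unfolding fixed[OF that] .
    then have "(z - center)\<^sup>2 = (z - center) * (b * cnj (z - center))"
      unfolding power2_eq_square by (rule arg_cong)
    also have "\<dots> = b * ((z - center) * cnj (z - center))"
      by (simp only: mult.left_commute)
    also have "\<dots> = b * complex_of_real ((norm (z - center))\<^sup>2)"
      by (simp only: complex_norm_square)
    finally show ?thesis using dist_center_eq[OF that x0] by simp
  qed
  then have "card V0 \<le> 2" by (intro card_le_2_if_squares_eq) blast
  then show False using three_le_card_V0 by simp
qed

lemma antiaffine_symmetry_is_bisector_reflection:
  assumes T: "\<And>z. T z = a + b * cnj z" and b: "norm b = 1"
    and TV0: "T ` V0 = V0" and Tc: "T center = center"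
  obtains z w where "z \<in> V0" "w \<in> V0" "z \<noteq> w" "T = bisector_reflection z w"
proof -
  obtain z where z: "z \<in> V0" "T z \<noteq> z" using antiaffine_symmetry_moves_V0[OF T Tc] by blast
  define w where "w = T z"
  have w: "w \<in> V0" "z \<noteq> w" using z TV0 w_def by auto
  have T_swap: "a + b * cnj z = w" "a + b * cnj w = z"
    using antiaffine_involution[OF b, where c = center] Tc unfolding w_def T by simp_all
  obtain a' b' where ab': "\<And>v. bisector_reflection z w v = a' + b' * cnj v"
    using bisector_reflection_antiaffine[OF w(2)] by blast
  have "a' + b' * cnj z = w" "a' + b' * cnj w = z"
    using bisector_reflection_swap[OF w(2)] bisector_reflection_involution[OF w(2), of z]
    unfolding ab' by simp_all
  then have "a = a' \<and> b = b'" using antiaffine_eq_if_swap[OF w(2) T_swap] by blast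
  then have "T = bisector_reflection z w" using T ab' by auto
  then show thesis using that z(1) w by blast
qed

lemma sym_rot_maps_cells:
  assumes u: "u \<in> sym_rots"
  shows "maps_cells (rot u)"
proof -
  have "\<not> card V0 \<le> Suc 0" using three_le_card_V0 by simp
  then obtain x y where xy: "x \<in> V0" "y \<in> V0" "x \<noteq> y"
    using card_le_Suc0_iff_eq[OF finite_V0] by blast
  let ?s = "bisector_reflection x y"
  obtain a b where ab: "\<And>z. ?s z = a + b * cnj z" and b: "norm b = 1"
    using bisector_reflection_antiaffine[OF xy(3)] by blast
  have u1: "norm u = 1" and uV0: "rot u ` V0 = V0" using u unfolding sym_rots_def by auto
  define T where "T = ?s \<circ> rot u"
  have T: "T z = (a + b * cnj center - b * cnj u * cnj center) + (b * cnj u) * cnj z" for z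
    unfolding T_def comp_def ab rot_def by (simp add: algebra_simps)
  have "norm (b * cnj u) = 1" using b u1 by (simp add: norm_mult)
  moreover have "T ` V0 = V0"
    unfolding T_def image_comp[symmetric] uV0 by (rule bisector_reflection_V0[OF xy])
  moreover have "T center = center"
    unfolding T_def comp_def rot_def using bisector_reflection_center[OF xy] by simp
  ultimately obtain z w where zw: "z \<in> V0" "w \<in> V0" "z \<noteq> w" "T = bisector_reflection z w"
    using antiaffine_symmetry_is_bisector_reflection[OF T] by blast
  have "rot u = ?s \<circ> T"
    unfolding T_def by (auto simp: bisector_reflection_involution[OF xy(3)])
  then show ?thesis
    using maps_cells_comp maps_cells_bisector_reflection xy zw by metis
qed

text \<open>Both sides map V0 onto the same 1-cell psi k' ` V0 and differ by a translation,
  which must then fix the mean of that cell, hence vanish.\<close>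
lemma sym_rot_psi_commute:
  assumes u: "u \<in> sym_rots" and k: "k \<in> {1..N}"
  obtains k' where "k' \<in> {1..N}" "\<And>z. rot u (psi k z) = psi k' (rot u z)"
proof -
  obtain k' where k': "k' \<in> {1..N}" and cell: "rot u ` psi k ` V0 = psi k' ` V0"
    using sym_rot_maps_cells[OF u] k unfolding maps_cells_def by blast
  have uV0: "rot u ` V0 = V0" using u unfolding sym_rots_def by auto
  define c where "c = center + u * nu k - u * center - center / Lc + u * center / Lc - nu k'"
  have shift: "rot u (psi k z) = c + psi k' (rot u z)" for z
    unfolding c_def rot_def psi_eq using Lc_nonzero by (simp add: field_simps)
  have "(\<lambda>y. c + y) ` psi k' ` V0 = (\<lambda>z. c + psi k' z) ` rot u ` V0"
    using uV0 by (simp add: image_image)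
  also have "\<dots> = psi k' ` V0"
    using cell by (simp add: image_image shift)
  finally have "(\<lambda>y. c + y) ` psi k' ` V0 = psi k' ` V0" .
  then have "c + mean (psi k' ` V0) = mean (psi k' ` V0)"
    by (intro real_affine_perm_fixes_mean[where f = "\<lambda>y. y"])
      (simp_all add: finite_V0 V0_nonempty bounded_linear_ident[THEN bounded_linear.linear])
  then have "c = 0" by simp
  then show thesis using that k' shift by simp
qed

section \<open>Cells of higher level\<close>

definition word :: "nat \<Rightarrow> (nat \<Rightarrow> nat) \<Rightarrow> bool" where
  "word n w \<longleftrightarrow> (\<forall>j\<in>{1..n}. w j \<in> {1..N})"

primrec cell_map :: "nat \<Rightarrow> (nat \<Rightarrow> nat) \<Rightarrow> complex \<Rightarrow> complex" where
  "cell_map 0 w z = z"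
| "cell_map (Suc n) w z = psi (w (Suc n)) (cell_map n w z)"

primrec level_vertices :: "nat \<Rightarrow> complex set" where
  "level_vertices 0 = V0"
| "level_vertices (Suc n) = (\<Union>i\<in>{1..N}. psi i ` level_vertices n)"

lemma word_Suc: "word (Suc n) w \<longleftrightarrow> word n w \<and> w (Suc n) \<in> {1..N}"
  unfolding word_def by (auto simp: le_Suc_eq)

lemma cell_map_cong: "(\<And>j. j \<in> {1..n} \<Longrightarrow> w j = w' j) \<Longrightarrow> cell_map n w z = cell_map n w' z"
  by (induction n) auto

lemma scaled_cell_map: "Lc ^ n * cell_map n w x = x + (\<Sum>j=1..n. Lc ^ j * nu (w j))"
proof (induction n)
  case (Suc n)
  have "Lc ^ Suc n * cell_map (Suc n) w x = Lc ^ n * cell_map n w x + Lc ^ Suc n * nu (w (Suc n))"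
    using Lc_nonzero by (simp add: psi_eq field_simps)
  then show ?case using Suc by simp
qed simp

lemma cell_map_mem_level_vertices:
  "word n w \<Longrightarrow> x \<in> V0 \<Longrightarrow> cell_map n w x \<in> level_vertices n"
  by (induction n) (auto simp: word_Suc)

lemma psi_K0_subset: "i \<in> {1..N} \<Longrightarrow> psi i ` K0 \<subseteq> K0"
  using K0_self_similar by blast

text \<open>Each point of V0 is the fixed point of a contraction psi i leaving the closed
  set K0 invariant, hence the limit of the orbit of any point of K0.\<close>
lemma V0_subset_K0: "V0 \<subseteq> K0"
proof
  fix x assume "x \<in> V0"
  then obtain i where i: "i \<in> {1..N}" and fixed: "psi i x = x"
    unfolding ess_fixed_pts_def fixed_pts_def by auto
  obtain a where a: "a \<in> K0" using K0_nonempty by auto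
  have orbit_K0: "(psi i ^^ k) a \<in> K0" for k
    by (induction k) (use a psi_K0_subset[OF i] in auto)
  have orbit: "(psi i ^^ k) a = x + (a - x) * (1 / Lc) ^ k" for k
  proof (induction k)
    case (Suc k)
    have nu_i: "nu i = x - x / Lc" using fixed by (simp add: psi_eq algebra_simps)
    have "(psi i ^^ Suc k) a = (x + (a - x) * (1 / Lc) ^ k) / Lc + (x - x / Lc)"
      by (simp only: funpow.simps comp_def Suc.IH psi_eq nu_i)
    also have "\<dots> = x + (a - x) * (1 / Lc) ^ Suc k" using Lc_nonzero by (simp add: field_simps)
    finally show ?case .
  qed simp
  have "norm (1 / Lc) < 1" using L_gt_1 by (simp add: norm_divide)
  then have "(\<lambda>k. x + (a - x) * (1 / Lc) ^ k) \<longlonglongrightarrow> x + (a - x) * 0"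
    by (intro tendsto_intros LIMSEQ_power_zero)
  then have "(\<lambda>k. (psi i ^^ k) a) \<longlonglongrightarrow> x" by (simp add: orbit)
  then show "x \<in> K0"
    by (rule closed_sequentially[OF compact_imp_closed[OF compact_K0], rotated]) (use orbit_K0 in simp)
qed

lemma level_vertices_subset_K0: "level_vertices n \<subseteq> K0"
  by (induction n) (use V0_subset_K0 psi_K0_subset in fastforce)+

lemma psi_eq_psi_imp_V0:
  assumes "i \<in> {1..N}" "j \<in> {1..N}" "i \<noteq> j" "y \<in> K0" "y' \<in> K0" "psi i y = psi j y'"
  shows "y \<in> V0 \<and> y' \<in> V0"
proof -
  have "psi i y \<in> psi i ` K0 \<inter> psi j ` K0" using assms(4-6) by (metis IntI imageI)
  then have "psi i y \<in> psi i ` V0 \<inter> psi j ` V0" using nesting[OF assms(1-3)] by simp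
  then obtain v v' where "v \<in> V0" "psi i y = psi i v" "v' \<in> V0" "psi j y' = psi j v'"
    using assms(6) by auto
  then show ?thesis by (simp add: psi_inject)
qed

lemma sym_rot_cell_map:
  assumes u: "u \<in> sym_rots"
  shows "word n w \<Longrightarrow> \<exists>w'. word n w' \<and> (\<forall>z. rot u (cell_map n w z) = cell_map n w' (rot u z))"
proof (induction n)
  case (Suc n)
  then obtain w' where w': "word n w'" "\<forall>z. rot u (cell_map n w z) = cell_map n w' (rot u z)"
    by (auto simp: word_Suc)
  obtain k' where k': "k' \<in> {1..N}" "\<And>z. rot u (psi (w (Suc n)) z) = psi k' (rot u z)"
    using sym_rot_psi_commute[OF u] Suc.prems by (auto simp: word_Suc)
  define w'' where "w'' = w'(Suc n := k')"
  have "cell_map n w'' z = cell_map n w' z" for z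
    by (rule cell_map_cong) (auto simp: w''_def)
  then have "rot u (cell_map (Suc n) w z) = cell_map (Suc n) w'' (rot u z)" for z
    using w'(2) k'(2) by (simp add: w''_def)
  moreover have "word (Suc n) w''"
    using w'(1) k'(1) unfolding w''_def word_def by (auto simp: le_Suc_eq)
  ultimately show ?case by blast
qed (simp add: word_def)

section \<open>Labellings of order zero\<close>

text \<open>The vertex sets of the 0-complexes are the translates V0 + s with s in shifts0.\<close>
definition shifts0 :: "complex set" where
  "shifts0 = {(\<Sum>j=1..n. Lc ^ j * nu (w j)) | n w. 1 \<le> n \<and> word n w}"

definition good_labelling0 :: "'a set \<Rightarrow> (complex \<Rightarrow> 'a) \<Rightarrow> bool" where
  "good_labelling0 A f \<longleftrightarrow>
     (\<forall>s\<in>shifts0. \<forall>x\<in>V0. f (x + s) \<in> A) \<and> bij_betw f V0 A \<and>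
     (\<forall>s\<in>shifts0. \<exists>u\<in>sym_rots. \<forall>x\<in>V0. f (x + s) = f (rot u x))"

end

text \<open>g (x + Lc * nu i) is the label of the vertex x + Lc * nu i of the 1-cell
  V0 + Lc * nu i (the cell psi i ` V0 rescaled by L), and rho i is the rotation of V0 that
  carries its labels.\<close>
locale consistent_labelling = nested_fractal +
  fixes g :: "complex \<Rightarrow> 'a" and A :: "'a set" and rho :: "nat \<Rightarrow> complex"
  assumes g_bij: "bij_betw g V0 A"
    and rho_mem: "\<And>i. i \<in> {1..N} \<Longrightarrow> rho i \<in> sym_rots"
    and g_rho: "\<And>i x. i \<in> {1..N} \<Longrightarrow> x \<in> V0 \<Longrightarrow> g (rot (rho i) x) = g (x + Lc * nu i)"
begin

lemma g_inject: "x \<in> V0 \<Longrightarrow> y \<in> V0 \<Longrightarrow> g x = g y \<longleftrightarrow> x = y"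
  using g_bij by (metis bij_betw_imp_inj_on inj_on_eq_iff)

lemma rho_1: "rho 1 = 1"
proof -
  obtain x where x: "x \<in> V0" "x \<noteq> center" using ex_V0_ne_center by blast
  have "g (rot (rho 1) x) = g x" using g_rho[OF one_mem_indices x(1)] nu_1 by simp
  then have "rot (rho 1) x = x" using g_inject rot_mem_V0[OF rho_mem[OF one_mem_indices] x(1)] x(1) by blast
  then have "(rho 1 - 1) * (x - center) = 0" unfolding rot_def by (simp add: algebra_simps)
  then show ?thesis using x(2) by simp
qed

lemma rot_rho_consistent:
  assumes "i \<in> {1..N}" "j \<in> {1..N}" "x \<in> V0" "y \<in> V0" "psi i x = psi j y"
  shows "rot (rho i) x = rot (rho j) y"
proof -
  have "x + Lc * nu i = Lc * psi i x" "y + Lc * nu j = Lc * psi j y"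
    using Lc_nonzero by (simp_all add: psi_eq field_simps)
  then have "g (rot (rho i) x) = g (rot (rho j) y)" using g_rho assms by simp
  then show ?thesis using g_inject rot_mem_V0 rho_mem assms by blast
qed

text \<open>The choice of (i, y) by SOME is irrelevant, see level_label_psi.\<close>
primrec level_label :: "nat \<Rightarrow> complex \<Rightarrow> 'a" where
  "level_label 0 z = g z"
| "level_label (Suc n) z =
    (let (i, y) = (SOME (i, y). i \<in> {1..N} \<and> y \<in> level_vertices n \<and> z = psi i y)
     in level_label n (rot (rho i) y))"

declare level_label.simps(2) [simp del]

lemma level_label_psi:
  assumes i: "i \<in> {1..N}" and y: "y \<in> level_vertices n"
  shows "level_label (Suc n) (psi i y) = level_label n (rot (rho i) y)"
proof -
  define P where "P = (\<lambda>(i', y'). i' \<in> {1..N} \<and> y' \<in> level_vertices n \<and> psi i y = psi i' y')"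
  obtain i' y' where p: "(SOME p. P p) = (i', y')" by fastforce
  have "P (i, y)" unfolding P_def using i y by simp
  then have "P (SOME p. P p)" by (rule someI)
  then have "P (i', y')" unfolding p .
  then have i': "i' \<in> {1..N}" and y': "y' \<in> level_vertices n" and eq: "psi i y = psi i' y'"
    unfolding P_def by simp_all
  have "rot (rho i') y' = rot (rho i) y"
  proof (cases "i' = i")
    case True
    then show ?thesis using eq by (simp add: psi_inject)
  next
    case False
    have "y \<in> V0 \<and> y' \<in> V0"
      using psi_eq_psi_imp_V0[OF i i' False[symmetric] _ _ eq] y y' level_vertices_subset_K0 by blast
    then show ?thesis using rot_rho_consistent[OF i' i _ _ eq[symmetric]] by simp
  qed
  moreover have "level_label (Suc n) (psi i y) = level_label n (rot (rho i') y')"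
    using p unfolding P_def by (simp add: level_label.simps(2))
  ultimately show ?thesis by simp
qed

lemma level_label_cell_map:
  "word n w \<Longrightarrow> \<exists>u\<in>sym_rots. \<forall>x\<in>V0. level_label n (cell_map n w x) = g (rot u x)"
proof (induction n arbitrary: w)
  case 0
  show ?case using one_mem_sym_rots by (intro bexI[of _ 1]) simp_all
next
  case (Suc n)
  define i where "i = w (Suc n)"
  have i: "i \<in> {1..N}" and w: "word n w" using Suc.prems unfolding i_def by (simp_all add: word_Suc)
  obtain w' where w': "word n w'" "\<And>z. rot (rho i) (cell_map n w z) = cell_map n w' (rot (rho i) z)"
    using sym_rot_cell_map[OF rho_mem[OF i] w] by blast
  obtain u where u: "u \<in> sym_rots" "\<forall>x\<in>V0. level_label n (cell_map n w' x) = g (rot u x)"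
    using Suc.IH[OF w'(1)] by blast
  have "level_label (Suc n) (cell_map (Suc n) w x) = g (rot (u * rho i) x)" if x: "x \<in> V0" for x
  proof -
    have "level_label (Suc n) (cell_map (Suc n) w x) = level_label n (rot (rho i) (cell_map n w x))"
      using level_label_psi[OF i cell_map_mem_level_vertices[OF w x]] by (simp add: i_def)
    also have "\<dots> = g (rot u (rot (rho i) x))"
      using u(2) rot_mem_V0[OF rho_mem[OF i] x] by (simp add: w'(2))
    finally show ?thesis by (simp add: rot_rot)
  qed
  then show ?case using mult_mem_sym_rots[OF u(1) rho_mem[OF i]] by blast
qed

text \<open>Since psi 1 z = z / Lc and rho 1 = 1, the labels of successive levels agree.\<close>
lemma level_label_div_Lc:
  assumes "z \<in> level_vertices n"
  shows "z / Lc ^ k \<in> level_vertices (n + k) \<and> level_label (n + k) (z / Lc ^ k) = level_label n z"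
proof (induction k)
  case (Suc k)
  have "z / Lc ^ Suc k = psi 1 (z / Lc ^ k)" unfolding psi_1 by (simp add: mult.commute)
  moreover have "psi 1 (z / Lc ^ k) \<in> level_vertices (Suc (n + k))"
    using Suc one_mem_indices by auto
  moreover have "level_label (Suc (n + k)) (psi 1 (z / Lc ^ k)) = level_label n z"
    using Suc level_label_psi[OF one_mem_indices, unfolded rho_1 rot_1] by simp
  ultimately show ?case by simp
qed (use assms in simp)

text \<open>By extension_eq the choice of n by SOME is irrelevant.\<close>
definition extension :: "complex \<Rightarrow> 'a" where
  "extension v = (let n = (SOME n. v / Lc ^ n \<in> level_vertices n) in level_label n (v / Lc ^ n))"

lemma extension_eq:
  assumes v: "v / Lc ^ n \<in> level_vertices n"
  shows "extension v = level_label n (v / Lc ^ n)"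
proof -
  have same: "level_label n' (v / Lc ^ n') = level_label m (v / Lc ^ m)"
    if "v / Lc ^ m \<in> level_vertices m" "m \<le> n'" for m n'
  proof -
    obtain k where n': "n' = m + k" using \<open>m \<le> n'\<close> le_Suc_ex by blast
    have "v / Lc ^ n' = (v / Lc ^ m) / Lc ^ k" by (simp add: n' power_add)
    then show ?thesis using level_label_div_Lc[OF that(1), of k] n' by (simp only:)
  qed
  define m where "m = (SOME n. v / Lc ^ n \<in> level_vertices n)"
  have m: "v / Lc ^ m \<in> level_vertices m" using v unfolding m_def by (rule someI)
  have "extension v = level_label m (v / Lc ^ m)" unfolding extension_def m_def[symmetric] Let_def ..
  also have "\<dots> = level_label n (v / Lc ^ n)"
  proof (cases "m \<le> n")
    case True
    then show ?thesis using same[OF m True] by simp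
  next
    case False
    then show ?thesis using same[OF v, of m] by simp
  qed
  finally show ?thesis .
qed

lemma extension_V0: "x \<in> V0 \<Longrightarrow> extension x = g x"
  using extension_eq[of x 0] by simp

lemma good_labelling0_extension: "good_labelling0 A extension"
proof -
  have shift: "\<exists>u\<in>sym_rots. \<forall>x\<in>V0. extension (x + s) = g (rot u x)" if s_mem: "s \<in> shifts0" for s
  proof -
    obtain n w where s: "s = (\<Sum>j=1..n. Lc ^ j * nu (w j))" and w: "word n w"
      using s_mem unfolding shifts0_def by blast
    obtain u where u: "u \<in> sym_rots" "\<forall>x\<in>V0. level_label n (cell_map n w x) = g (rot u x)"
      using level_label_cell_map[OF w] by blast
    have "extension (x + s) = g (rot u x)" if x: "x \<in> V0" for x
    proof -
      have "(x + s) / Lc ^ n = cell_map n w x"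
        using scaled_cell_map[of n w x] Lc_nonzero unfolding s by (simp add: field_simps)
      then show ?thesis
        using extension_eq cell_map_mem_level_vertices[OF w x] u(2) x by metis
    qed
    then show ?thesis using u(1) by blast
  qed
  have g_A: "g x \<in> A" if "x \<in> V0" for x using g_bij that by (auto dest: bij_betwE)
  have "bij_betw extension V0 A" using g_bij extension_V0 by (simp cong: bij_betw_cong)
  moreover have "\<forall>s\<in>shifts0. \<forall>x\<in>V0. extension (x + s) \<in> A"
    using shift g_A rot_mem_V0 by fastforce
  moreover have "\<forall>s\<in>shifts0. \<exists>u\<in>sym_rots. \<forall>x\<in>V0. extension (x + s) = extension (rot u x)"
    using shift extension_V0 rot_mem_V0 by fastforce
  ultimately show ?thesis unfolding good_labelling0_def by blast
qed

end

section \<open>Rescaling to order M\<close>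

lemma V_M_next_subset_V_M_inf: "V_M_next L N nu K0 M \<subseteq> V_M_inf L N nu M"
  unfolding V_M_next_def V_M_inf_def by blast

context nested_fractal
begin

lemma scl_nonzero: "scl L M \<noteq> 0"
  using L_gt_1 unfolding scl_def by simp

lemma scl_add_nat: "scl L (M + int k) = Lc ^ k * scl L M"
  using L_gt_1 unfolding scl_def by (simp add: power_int_add mult.commute)

lemma sum_scl_reindex:
  "(\<Sum>j\<in>{M + 1..M + int n}. scl L j * nu (w j)) = scl L M * (\<Sum>k=1..n. Lc ^ k * nu (w (M + int k)))"
proof -
  have "{M + 1..M + int n} = (\<lambda>k. M + int k) ` {1..n}"
    by (simp add: image_image[of "(+) M" int, symmetric] image_int_atLeastAtMost add.commute)
  moreover have "inj_on (\<lambda>k. M + int k) {1..n}" by (simp add: inj_on_def)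
  ultimately show ?thesis
    by (simp add: sum.reindex scl_add_nat sum_distrib_left algebra_simps)
qed

lemma complex_shifts_eq: "complex_shifts L N nu M = (\<lambda>s. scl L M * s) ` shifts0"
proof (intro set_eqI iffI)
  fix t assume "t \<in> complex_shifts L N nu M"
  then obtain J w where t: "t = (\<Sum>j\<in>{M + 1..J}. scl L j * nu (w j))" and J: "M + 1 \<le> J"
    and w: "\<forall>j\<in>{M + 1..J}. w j \<in> {1..N}"
    unfolding complex_shifts_def by blast
  define n where "n = nat (J - M)"
  have J_eq: "J = M + int n" using J unfolding n_def by simp
  have "word n (\<lambda>k. w (M + int k))" using w unfolding word_def J_eq by auto
  moreover have "1 \<le> n" using J unfolding n_def by simp
  ultimately have "(\<Sum>k=1..n. Lc ^ k * nu (w (M + int k))) \<in> shifts0"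
    unfolding shifts0_def mem_Collect_eq by (intro exI[of _ n] exI[of _ "\<lambda>k. w (M + int k)"]) simp
  moreover have "t = scl L M * (\<Sum>k=1..n. Lc ^ k * nu (w (M + int k)))"
    unfolding t J_eq by (rule sum_scl_reindex)
  ultimately show "t \<in> (\<lambda>s. scl L M * s) ` shifts0" by blast
next
  fix t assume "t \<in> (\<lambda>s. scl L M * s) ` shifts0"
  then obtain n w where t: "t = scl L M * (\<Sum>k=1..n. Lc ^ k * nu (w k))" and n: "1 \<le> n"
    and w: "word n w"
    unfolding shifts0_def by blast
  define w' where "w' j = w (nat (j - M))" for j
  have "t = (\<Sum>j\<in>{M + 1..M + int n}. scl L j * nu (w' j))"
    unfolding sum_scl_reindex t w'_def by simp
  moreover have "\<forall>j\<in>{M + 1..M + int n}. w' j \<in> {1..N}"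
    using w unfolding word_def w'_def by (auto simp: nat_le_iff)
  ultimately show "t \<in> complex_shifts L N nu M"
    unfolding complex_shifts_def using n by fastforce
qed

lemma V_MM_eq: "V_MM L N nu M = (\<lambda>x. scl L M * x) ` V0"
  unfolding V_MM_def ..

lemma bij_betw_scl_V_MM: "bij_betw (\<lambda>x. scl L M * x) V0 (V_MM L N nu M)"
  unfolding V_MM_eq using scl_nonzero by (intro inj_on_imp_bij_betw) (simp add: inj_on_def)

lemma cell_vertices_scl: "cell_vertices L N nu M (scl L M * s) = (\<lambda>x. scl L M * (x + s)) ` V0"
  unfolding cell_vertices_def by (simp add: algebra_simps)

lemma barycenter_M_eq: "barycenter_M L N nu M = scl L M * center"
proof -
  have "(\<Sum>v\<in>V_MM L N nu M. v) = (\<Sum>x\<in>V0. scl L M * x)"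
    using sum.reindex_bij_betw[OF bij_betw_scl_V_MM, of id] by simp
  also have "\<dots> = scl L M * sum id V0" by (simp add: sum_distrib_left)
  finally have "(\<Sum>v\<in>V_MM L N nu M. v) = scl L M * sum id V0" .
  moreover have "card (V_MM L N nu M) = card V0"
    using bij_betw_scl_V_MM by (rule bij_betw_same_card[symmetric])
  ultimately show ?thesis unfolding barycenter_M_def center_def mean_def by simp
qed

lemma rotations_M_eq:
  "rotations_M L N nu M = (\<lambda>u z. scl L M * rot u (z / scl L M)) ` sym_rots"
proof -
  let ?c = "scl L M"
  have R: "(\<lambda>z. barycenter_M L N nu M + u * (z - barycenter_M L N nu M)) = (\<lambda>z. ?c * rot u (z / ?c))"
    for u using scl_nonzero by (auto simp: barycenter_M_eq rot_def field_simps)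
  have "(\<lambda>z. ?c * rot u (z / ?c)) ` V_MM L N nu M = (\<lambda>x. ?c * x) ` rot u ` V0" for u
    unfolding V_MM_eq image_image using scl_nonzero by simp
  then have "(\<lambda>z. ?c * rot u (z / ?c)) ` V_MM L N nu M = V_MM L N nu M \<longleftrightarrow> rot u ` V0 = V0" for u
    unfolding V_MM_eq using scl_nonzero by (simp add: inj_image_eq_iff inj_on_def)
  then show ?thesis unfolding rotations_M_def sym_rots_def R by auto
qed

lemma rotation_condition_iff:
  "(\<exists>R\<in>rotations_M L N nu M. \<forall>v\<in>cell_vertices L N nu M (scl L M * s). P (R (v - scl L M * s)) v)
   \<longleftrightarrow> (\<exists>u\<in>sym_rots. \<forall>x\<in>V0. P (scl L M * rot u x) (scl L M * (x + s)))"
  unfolding rotations_M_eq cell_vertices_scl using scl_nonzero by (simp add: algebra_simps)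

lemma good_labelling_iff:
  "good_labelling L N nu A M l \<longleftrightarrow> good_labelling0 A (\<lambda>z. l (scl L M * z))"
proof -
  let ?c = "scl L M"
  have "(\<forall>v\<in>V_M_inf L N nu M. l v \<in> A) \<longleftrightarrow> (\<forall>s\<in>shifts0. \<forall>x\<in>V0. l (?c * (x + s)) \<in> A)"
    unfolding V_M_inf_def complex_shifts_eq by (simp add: cell_vertices_scl)
  moreover have "bij_betw l (V_MM L N nu M) A \<longleftrightarrow> bij_betw (\<lambda>z. l (?c * z)) V0 A"
    using bij_betw_comp_iff[OF bij_betw_scl_V_MM[of M], of l A] unfolding comp_def .
  moreover have "(\<forall>t\<in>complex_shifts L N nu M. \<exists>R\<in>rotations_M L N nu M.
                   \<forall>v\<in>cell_vertices L N nu M t. l v = l (R (v - t)))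
      \<longleftrightarrow> (\<forall>s\<in>shifts0. \<exists>u\<in>sym_rots. \<forall>x\<in>V0. l (?c * (x + s)) = l (?c * rot u x))"
    unfolding complex_shifts_eq ball_simps
    by (simp only: rotation_condition_iff[where P = "\<lambda>a b. l b = l a"])
  ultimately show ?thesis unfolding good_labelling_def good_labelling0_def by simp
qed

lemma good_labelling_property_iff:
  "good_labelling_property L N nu A \<longleftrightarrow> (\<exists>f. good_labelling0 A f)"
proof
  assume "good_labelling_property L N nu A"
  then show "\<exists>f. good_labelling0 A f"
    unfolding good_labelling_property_def good_labelling_iff by blast
next
  assume "\<exists>f. good_labelling0 A f"
  moreover have "scl L 0 = 1" unfolding scl_def by simp
  ultimately have "\<exists>f. good_labelling L N nu A 0 f" by (simp add: good_labelling_iff)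
  then show "good_labelling_property L N nu A"
    unfolding good_labelling_property_def by blast
qed

lemma good_labelling0_relabel:
  assumes f: "good_labelling0 A f" and h: "bij_betw h V0 A"
  obtains f' where "good_labelling0 A f'" and "\<And>x. x \<in> V0 \<Longrightarrow> f' x = h x"
proof
  define \<sigma> where "\<sigma> = h \<circ> inv_into V0 f"
  have f_bij: "bij_betw f V0 A" using f unfolding good_labelling0_def by blast
  have \<sigma>_A: "\<sigma> a \<in> A" if "a \<in> A" for a
    using that bij_betwE[OF bij_betw_inv_into[OF f_bij]] bij_betwE[OF h] unfolding \<sigma>_def by simp
  show \<sigma>f: "(\<sigma> \<circ> f) x = h x" if "x \<in> V0" for x
    using that f_bij unfolding \<sigma>_def by (simp add: bij_betw_imp_inj_on)
  have "bij_betw (\<sigma> \<circ> f) V0 A" using h \<sigma>f by (simp cong: bij_betw_cong)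
  moreover have "\<exists>u\<in>sym_rots. \<forall>x\<in>V0. (\<sigma> \<circ> f) (x + s) = (\<sigma> \<circ> f) (rot u x)"
    if "s \<in> shifts0" for s
    using f that unfolding good_labelling0_def comp_def by metis
  ultimately show "good_labelling0 A (\<sigma> \<circ> f)"
    using f \<sigma>_A unfolding good_labelling0_def by simp
qed

lemma Lc_nu_mem_shifts0: "i \<in> {1..N} \<Longrightarrow> Lc * nu i \<in> shifts0"
  unfolding shifts0_def mem_Collect_eq
  by (intro exI[of _ 1] exI[of _ "\<lambda>_. i"]) (simp add: word_def)

lemma good_labelling0_if_consistent:
  assumes g: "bij_betw g V0 A"
    and rotations: "\<forall>i\<in>{1..N}. \<exists>u\<in>sym_rots. \<forall>x\<in>V0. g (rot u x) = g (x + Lc * nu i)"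
  shows "\<exists>f. good_labelling0 A f"
proof -
  from rotations have ex: "\<forall>i\<in>{1..N}. \<exists>u. u \<in> sym_rots \<and> (\<forall>x\<in>V0. g (rot u x) = g (x + Lc * nu i))"
    by blast
  obtain rho where "\<forall>i\<in>{1..N}. rho i \<in> sym_rots \<and> (\<forall>x\<in>V0. g (rot (rho i) x) = g (x + Lc * nu i))"
    using bchoice[OF ex] by blast
  then interpret consistent_labelling L N nu K0 g A rho
    using g by unfold_locales auto
  show ?thesis using good_labelling0_extension by blast
qed

definition good_extension :: "'a set \<Rightarrow> int \<Rightarrow> (complex \<Rightarrow> 'a) \<Rightarrow> (complex \<Rightarrow> 'a) \<Rightarrow> bool" where
  "good_extension A M l0 l \<longleftrightarrow>
     (\<forall>v\<in>V_M_next L N nu K0 M. l v \<in> A) \<and>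
     (\<forall>v\<in>V_MM L N nu M. l v = l0 v) \<and>
     (\<forall>i\<in>{1..N}. \<exists>R\<in>rotations_M L N nu M.
        \<forall>v\<in>cell_vertices L N nu M (scl L (M + 1) * nu i).
          l (R (v - scl L (M + 1) * nu i)) = l v)"

lemma scl_Suc_nu: "scl L (M + 1) * nu i = scl L M * (Lc * nu i)"
  using scl_add_nat[of M 1] by simp

lemma good_extension_if_good_labelling0:
  assumes l0: "bij_betw l0 (V_MM L N nu M) A" and f: "good_labelling0 A f"
  shows "\<exists>l. good_extension A M l0 l"
proof -
  let ?c = "scl L M"
  have "bij_betw (\<lambda>x. l0 (?c * x)) V0 A"
    using bij_betw_comp_iff[OF bij_betw_scl_V_MM[of M], of l0 A] l0 unfolding comp_def by simp
  then obtain f' where f': "good_labelling0 A f'" and f'_l0: "\<And>x. x \<in> V0 \<Longrightarrow> f' x = l0 (?c * x)"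
    using good_labelling0_relabel[OF f] by blast
  define l where "l v = f' (v / ?c)" for v
  have l_scl: "l (?c * z) = f' z" for z unfolding l_def using scl_nonzero by simp
  have "good_labelling L N nu A M l" unfolding good_labelling_iff l_scl using f' by simp
  then have "\<forall>v\<in>V_M_next L N nu K0 M. l v \<in> A"
    using V_M_next_subset_V_M_inf unfolding good_labelling_def by blast
  moreover have "\<forall>v\<in>V_MM L N nu M. l v = l0 v"
    unfolding V_MM_eq by (auto simp: l_scl f'_l0)
  moreover have "\<exists>R\<in>rotations_M L N nu M. \<forall>v\<in>cell_vertices L N nu M (scl L (M + 1) * nu i).
      l (R (v - scl L (M + 1) * nu i)) = l v" if "i \<in> {1..N}" for i
    using f' Lc_nu_mem_shifts0[OF that] unfolding good_labelling0_def scl_Suc_nu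
    by (simp add: rotation_condition_iff[where P = "\<lambda>a b. l a = l b"] l_scl) metis
  ultimately show ?thesis unfolding good_extension_def by blast
qed

lemma good_labelling0_if_good_extension:
  assumes l0: "bij_betw l0 (V_MM L N nu M) A" and l: "good_extension A M l0 l"
  shows "\<exists>f. good_labelling0 A f"
proof (rule good_labelling0_if_consistent)
  let ?c = "scl L M"
  have "bij_betw l (V_MM L N nu M) A"
    using l0 l unfolding good_extension_def by (simp cong: bij_betw_cong)
  then show "bij_betw (\<lambda>x. l (?c * x)) V0 A"
    using bij_betw_comp_iff[OF bij_betw_scl_V_MM[of M], of l A] unfolding comp_def by simp
  show "\<forall>i\<in>{1..N}. \<exists>u\<in>sym_rots. \<forall>x\<in>V0. l (?c * rot u x) = l (?c * (x + Lc * nu i))"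
    using l unfolding good_extension_def scl_Suc_nu
    by (simp add: rotation_condition_iff[where P = "\<lambda>a b. l a = l b"])
qed

end

theorem proposition3p6:
  fixes L :: real and N :: nat and nu :: "nat \<Rightarrow> complex" and K0 :: "complex set"
    and A :: "'a set" and M :: int and l0 :: "complex \<Rightarrow> 'a"
  assumes fractal: "planar_simple_nested_fractal L N nu K0"
    and k3: "card (ess_fixed_pts L N nu) \<ge> 3"
    and alphabet: "finite A" "card A = card (ess_fixed_pts L N nu)"
    and l0_bij: "bij_betw l0 (V_MM L N nu M) A"
  shows "good_labelling_property L N nu A \<longleftrightarrow>
    (\<exists>l. (\<forall>v\<in>V_M_next L N nu K0 M. l v \<in> A) \<and>
         (\<forall>v\<in>V_MM L N nu M. l v = l0 v) \<and>
         (\<forall>i\<in>{1..N}. \<exists>R\<in>rotations_M L N nu M.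
            \<forall>v\<in>cell_vertices L N nu M (scl L (M + 1) * nu i).
              l (R (v - scl L (M + 1) * nu i)) = l v))"
proof -
  interpret nested_fractal L N nu K0
    using fractal k3 by unfold_locales
  show ?thesis
    unfolding good_labelling_property_iff good_extension_def[symmetric]
    using good_extension_if_good_labelling0[OF l0_bij] good_labelling0_if_good_extension[OF l0_bij]
    by blast
qed

end
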